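(* Let $f,g:\mathbb N\to\mathbb C$ and $\beta\in\mathbb C$ satisfy: for every even $n\in\mathbb N$, $g(n+2)f(n+2)-g(n)f(n)\mathbf 1_{\{n\ge2\}}=\beta$. Assume $|f(2n)|>0$ for all $n\ge1$ and that the limit $M_f=\lim_{n\to\infty}n/|f(2n)|\in[0,\infty]$ exists. Then for all $l,m,n\in\mathbb N$ and all $\alpha\in\mathbb C$ with $|\alpha|<M_f$, $\Omega\in\mathrm D\big((g_{N+2}L^2)^l N^m (f_NL^{*2})^n e^{\alpha f_NL^{*2}}\big)$, and $\xi_{\alpha,f}=e^{\alpha f_NL^{*2}}\Omega$ satisfies $g_{N+2}L^2\,\xi_{\alpha,f}=\alpha\beta\,\xi_{\alpha,f}$.
   Context: $\ell^2=\ell^2(\mathbb N)$, $\mathbb N=\{0,1,\dots\}$, basis $(\xi_n)$, $\Omega=\xi_0$; $N\xi_n=n\xi_n$ (maximal domain). $f_NL^{*2}$ is the operator $\xi_n\mapsto f(n+2)\xi_{n+2}$ (closure from finite combinations, maximal domain); $g_{N+2}L^2$ is the operator $\xi_n\mapsto g(n)\xi_{n-2}$ for $n\ge2$ and $\xi_0,\xi_1\mapsto0$ (maximal domain). Exponentials are defined by power series: $e^{A}\varphi=\sum_k A^k\varphi/k!$ on the set of $\varphi\in\bigcap_k\mathrm D(A^k)$ for which the series converges; compositions have their natural domains. *)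

theory Defs
  imports "HOL-Analysis.Analysis"
begin

text \<open>Vectors of l2(N) are represented by their coefficient sequences w.r.t. the
  basis xi_n; an (unbounded) operator is a pair (domain, action).\<close>

type_synonym vec = "nat \<Rightarrow> complex"
type_synonym op = "vec set \<times> (vec \<Rightarrow> vec)"

definition l2 :: "vec set" where
  "l2 = {x. summable (\<lambda>n. (cmod (x n))^2)}"

definition l2norm :: "vec \<Rightarrow> real" where
  "l2norm x = sqrt (\<Sum>n. (cmod (x n))^2)"

definition opdom :: "op \<Rightarrow> vec set" where "opdom A = fst A"
definition opapp :: "op \<Rightarrow> vec \<Rightarrow> vec" where "opapp A = snd A"

definition basis :: "nat \<Rightarrow> vec" where "basis n = (\<lambda>k. if k = n then 1 else 0)"
definition Omega :: vec where "Omega = basis 0"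

definition numop :: op where
  "numop = ({x \<in> l2. (\<lambda>k. of_nat k * x k) \<in> l2}, \<lambda>x k. of_nat k * x k)"

text \<open>f_N L*^2 : xi_n \<mapsto> f(n+2) xi_(n+2), maximal domain\<close>
definition raise_op :: "(nat \<Rightarrow> complex) \<Rightarrow> op" where
  "raise_op f = ({x \<in> l2. (\<lambda>k. if k < 2 then 0 else f k * x (k - 2)) \<in> l2},
                 \<lambda>x k. if k < 2 then 0 else f k * x (k - 2))"

text \<open>g_(N+2) L^2 : xi_n \<mapsto> g(n) xi_(n-2) (n \<ge> 2), xi_0, xi_1 \<mapsto> 0, maximal domain\<close>
definition lower_op :: "(nat \<Rightarrow> complex) \<Rightarrow> op" where
  "lower_op g = ({x \<in> l2. (\<lambda>k. g (k + 2) * x (k + 2)) \<in> l2},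
                 \<lambda>x k. g (k + 2) * x (k + 2))"

definition op_comp :: "op \<Rightarrow> op \<Rightarrow> op" where
  "op_comp A B = ({x \<in> opdom B. opapp B x \<in> opdom A}, \<lambda>x. opapp A (opapp B x))"

primrec op_pow :: "op \<Rightarrow> nat \<Rightarrow> op" where
  "op_pow A 0 = (l2, \<lambda>x. x)"
| "op_pow A (Suc k) = op_comp A (op_pow A k)"

definition exp_partial :: "op \<Rightarrow> complex \<Rightarrow> vec \<Rightarrow> nat \<Rightarrow> vec" where
  "exp_partial A c phi N = (\<lambda>j. \<Sum>k<N. c ^ k * opapp (op_pow A k) phi j / of_nat (fact k))"

definition exp_converges_to :: "op \<Rightarrow> complex \<Rightarrow> vec \<Rightarrow> vec \<Rightarrow> bool" where
  "exp_converges_to A c phi y \<longleftrightarrow> y \<in> l2 \<and>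
     (\<lambda>N. l2norm (\<lambda>j. exp_partial A c phi N j - y j)) \<longlonglongrightarrow> 0"

definition op_exp :: "op \<Rightarrow> complex \<Rightarrow> op" where
  "op_exp A c = ({phi. (\<forall>k. phi \<in> opdom (op_pow A k)) \<and> (\<exists>y. exp_converges_to A c phi y)},
                 \<lambda>phi. THE y. exp_converges_to A c phi y)"

end

theory Submission
  imports Defs "HOL-Real_Asymp.Real_Asymp"
begin

text \<open>Every vector in sight has the form \<open>\<Sum>\<^sub>k c\<^sub>k (f\<^sub>NL\<^sup>*\<^sup>2)\<^sup>k \<Omega>\<close>, and on such
  vectors the three operators act on the coefficient sequence \<open>c\<close> alone: \<open>f\<^sub>NL\<^sup>*\<^sup>2\<close> shifts
  it, \<open>N\<close> multiplies \<open>c\<^sub>k\<close> by \<open>2k\<close>, and, since \<open>g(2k+2) f(2k+2) = (k+1) \<beta>\<close>, the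
  lowering operator sends it to \<open>(k+1) \<beta> c\<^sub>k\<^sub>+\<^sub>1\<close>. These maps preserve the growth class
  \<open>|c\<^sub>k| \<le> C (k+1)\<^sup>p r\<^sup>k / k!\<close>. As \<open>(f\<^sub>NL\<^sup>*\<^sup>2)\<^sup>k \<Omega>\<close> has norm \<open>|f(2) \<cdots> f(2k)|\<close>, which grows
  at most like \<open>k! / r'\<^sup>k\<close> for every \<open>r' < M\<^sub>f\<close>, the ratio test puts the whole class into
  \<open>\<ell>\<^sup>2\<close> when \<open>r < M\<^sub>f\<close>. The exponential series has \<open>c\<^sub>k = \<alpha>\<^sup>k / k!\<close>, which lies in the
  class for \<open>|\<alpha>| \<le> r\<close> and satisfies \<open>(k+1) \<beta> c\<^sub>k\<^sub>+\<^sub>1 = \<alpha>\<beta> c\<^sub>k\<close>.\<close>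

lemma opdom_op_comp: "opdom (op_comp A B) = {x \<in> opdom B. opapp B x \<in> opdom A}"
  by (simp add: op_comp_def opdom_def)

lemma opapp_op_comp: "opapp (op_comp A B) x = opapp A (opapp B x)"
  by (simp add: op_comp_def opapp_def)

lemma opapp_op_pow: "opapp (op_pow A k) = opapp A ^^ k"
  by (induction k) (simp_all add: op_comp_def opapp_def)

definition maximal_domain :: "op \<Rightarrow> bool" where
  "maximal_domain A \<longleftrightarrow> opdom A = {x \<in> l2. opapp A x \<in> l2}"

lemma maximal_domain_raise_op: "maximal_domain (raise_op f)"
  by (simp add: maximal_domain_def raise_op_def opdom_def opapp_def)

lemma maximal_domain_numop: "maximal_domain numop"
  by (simp add: maximal_domain_def numop_def opdom_def opapp_def)

lemma maximal_domain_lower_op: "maximal_domain (lower_op g)"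
  by (simp add: maximal_domain_def lower_op_def opdom_def opapp_def)

lemma opdom_op_pow:
  assumes "maximal_domain A"
  shows "x \<in> opdom (op_pow A k) \<longleftrightarrow> (\<forall>i\<le>k. (opapp A ^^ i) x \<in> l2)"
proof (induction k)
  case 0
  then show ?case by (simp add: opdom_def)
next
  case (Suc k)
  have "x \<in> opdom (op_pow A (Suc k)) \<longleftrightarrow>
        x \<in> opdom (op_pow A k) \<and> (opapp A ^^ k) x \<in> opdom A"
    by (simp add: opdom_op_comp opapp_op_pow)
  also have "\<dots> \<longleftrightarrow> (\<forall>i\<le>k. (opapp A ^^ i) x \<in> l2) \<and> (opapp A ^^ Suc k) x \<in> l2"
    using Suc assms by (auto simp: maximal_domain_def)
  also have "\<dots> \<longleftrightarrow> (\<forall>i\<le>Suc k. (opapp A ^^ i) x \<in> l2)"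
    using le_Suc_eq by auto
  finally show ?case .
qed

lemma l2_diff:
  assumes "x \<in> l2" "y \<in> l2"
  shows "(\<lambda>j. x j - y j) \<in> l2"
proof -
  have bound: "(cmod (x j - y j))^2 \<le> 2 * (cmod (x j))^2 + 2 * (cmod (y j))^2" for j
  proof -
    have "(cmod (x j - y j))^2 \<le> (cmod (x j) + cmod (y j))^2"
      by (intro power_mono norm_triangle_ineq4) auto
    also have "\<dots> \<le> 2 * (cmod (x j))^2 + 2 * (cmod (y j))^2"
      using zero_le_power2[of "cmod (x j) - cmod (y j)"]
      unfolding power2_sum power2_diff by linarith
    finally show ?thesis .
  qed
  have "summable (\<lambda>j. 2 * (cmod (x j))^2 + 2 * (cmod (y j))^2)"
    using assms unfolding l2_def by (intro summable_add summable_mult) auto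
  then show ?thesis
    unfolding l2_def using bound by (auto intro: summable_comparison_test')
qed

lemma norm_le_l2norm:
  assumes "x \<in> l2"
  shows "cmod (x j) \<le> l2norm x"
proof -
  have "(\<Sum>i\<in>{j}. (cmod (x i))^2) \<le> (\<Sum>i. (cmod (x i))^2)"
    using assms unfolding l2_def by (intro sum_le_suminf) auto
  then have "sqrt ((cmod (x j))^2) \<le> l2norm x"
    unfolding l2norm_def by (intro real_sqrt_le_mono) simp
  then show ?thesis by simp
qed

text \<open>\<open>l2norm\<close> of a vector outside \<open>l2\<close> is the junk value \<open>sqrt 0\<close>, whence the membership
  hypotheses.\<close>
lemma l2_limit_unique:
  assumes x: "\<And>N. x N \<in> l2" and "y \<in> l2" "z \<in> l2"
    and "(\<lambda>N. l2norm (\<lambda>j. x N j - y j)) \<longlonglongrightarrow> 0"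
    and "(\<lambda>N. l2norm (\<lambda>j. x N j - z j)) \<longlonglongrightarrow> 0"
  shows "y = z"
proof
  fix j
  have coordinate: "(\<lambda>N. x N j) \<longlonglongrightarrow> w j"
    if "w \<in> l2" and "(\<lambda>N. l2norm (\<lambda>j. x N j - w j)) \<longlonglongrightarrow> 0" for w
  proof (rule Lim_transform[OF tendsto_const])
    show "(\<lambda>N. x N j - w j) \<longlonglongrightarrow> 0"
      using norm_le_l2norm[OF l2_diff[OF x \<open>w \<in> l2\<close>]]
      by (intro Lim_null_comparison[OF _ that(2)] always_eventually) simp
  qed
  show "y j = z j"
    using coordinate[of y] coordinate[of z] assms by (blast intro: LIMSEQ_unique)
qed

lemma op_exp_apply:
  assumes "\<And>k. phi \<in> opdom (op_pow A k)" and "\<And>N. exp_partial A c phi N \<in> l2"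
    and y: "exp_converges_to A c phi y"
  shows "phi \<in> opdom (op_exp A c)" and "opapp (op_exp A c) phi = y"
proof -
  show "phi \<in> opdom (op_exp A c)"
    using assms by (auto simp: op_exp_def opdom_def)
  have "z = y" if "exp_converges_to A c phi z" for z
    using that y assms(2) by (auto simp: exp_converges_to_def intro: l2_limit_unique)
  then show "opapp (op_exp A c) phi = y"
    unfolding op_exp_def opapp_def snd_conv using y by (intro the_equality)
qed

definition raise_prod :: "(nat \<Rightarrow> complex) \<Rightarrow> nat \<Rightarrow> complex" where
  "raise_prod f k = (\<Prod>i\<in>{1..k}. f (2 * i))"

text \<open>\<open>even_vec f c = \<Sum>\<^sub>k c\<^sub>k (f\<^sub>NL\<^sup>*\<^sup>2)\<^sup>k \<Omega>\<close>\<close>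
definition even_vec :: "(nat \<Rightarrow> complex) \<Rightarrow> (nat \<Rightarrow> complex) \<Rightarrow> vec" where
  "even_vec f c = (\<lambda>j. if even j then c (j div 2) * raise_prod f (j div 2) else 0)"

definition coeff_shift :: "(nat \<Rightarrow> complex) \<Rightarrow> nat \<Rightarrow> complex" where
  "coeff_shift c = (\<lambda>k. if k = 0 then 0 else c (k - 1))"

definition number_coeffs :: "(nat \<Rightarrow> complex) \<Rightarrow> nat \<Rightarrow> complex" where
  "number_coeffs c = (\<lambda>k. 2 * of_nat k * c k)"

definition lower_coeffs :: "complex \<Rightarrow> (nat \<Rightarrow> complex) \<Rightarrow> nat \<Rightarrow> complex" where
  "lower_coeffs \<beta> c = (\<lambda>k. (of_nat k + 1) * \<beta> * c (k + 1))"

definition exp_coeffs :: "complex \<Rightarrow> nat \<Rightarrow> complex" where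
  "exp_coeffs a = (\<lambda>k. a ^ k / fact k)"

lemma raise_prod_0 [simp]: "raise_prod f 0 = 1"
  by (simp add: raise_prod_def)

lemma raise_prod_Suc: "raise_prod f (Suc k) = f (2 * Suc k) * raise_prod f k"
  by (simp add: raise_prod_def prod.nat_ivl_Suc' mult.commute)

lemma Omega_eq_even_vec: "Omega = even_vec f (basis 0)"
  by (auto simp: Omega_def basis_def even_vec_def fun_eq_iff)

lemma even_vec_diff: "(\<lambda>j. even_vec f c j - even_vec f d j) = even_vec f (\<lambda>k. c k - d k)"
  by (auto simp: even_vec_def fun_eq_iff algebra_simps)

lemma even_vec_scale: "even_vec f (\<lambda>k. t * c k) = (\<lambda>j. t * even_vec f c j)"
  by (auto simp: even_vec_def fun_eq_iff)

lemma sums_even_vec: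
  assumes "summable (\<lambda>k. (cmod (c k * raise_prod f k))^2)"
  shows "(\<lambda>j. (cmod (even_vec f c j))^2) sums (\<Sum>k. (cmod (c k * raise_prod f k))^2)"
proof -
  have "(\<lambda>k. (cmod (even_vec f c (2 * k)))^2) sums (\<Sum>k. (cmod (c k * raise_prod f k))^2)"
    using summable_sums[OF assms] by (simp add: even_vec_def)
  then show ?thesis
    by (subst (asm) sums_mono_reindex[of "\<lambda>k. 2 * k"])
       (auto simp: strict_mono_def even_vec_def elim!: evenE)
qed

lemma raise_op_even_vec: "opapp (raise_op f) (even_vec f c) = even_vec f (coeff_shift c)"
proof
  fix j
  show "opapp (raise_op f) (even_vec f c) j = even_vec f (coeff_shift c) j"
  proof (cases "j < 2")
    case True
    then show ?thesis
      by (auto simp: raise_op_def opapp_def even_vec_def coeff_shift_def less_2_cases_iff)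
  next
    case False
    then obtain i where j: "j = i + 2"
      by (metis add.commute le_Suc_ex not_less)
    then show ?thesis
      by (cases "even i")
         (auto simp: raise_op_def opapp_def even_vec_def coeff_shift_def raise_prod_Suc
               elim!: evenE)
  qed
qed

lemma numop_even_vec: "opapp numop (even_vec f c) = even_vec f (number_coeffs c)"
  by (auto simp: numop_def opapp_def even_vec_def number_coeffs_def fun_eq_iff)

lemma lower_op_even_vec:
  assumes "\<And>k. g (2 * k + 2) * f (2 * k + 2) = (of_nat k + 1) * \<beta>"
  shows "opapp (lower_op g) (even_vec f c) = even_vec f (lower_coeffs \<beta> c)"
proof
  fix j
  show "opapp (lower_op g) (even_vec f c) j = even_vec f (lower_coeffs \<beta> c) j"
  proof (cases "even j")
    case True
    then obtain k where k: "j = 2 * k" by blast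
    then have "(j + 2) div 2 = Suc k" by simp
    then show ?thesis
      using k assms[of k]
      by (simp add: lower_op_def opapp_def even_vec_def lower_coeffs_def raise_prod_Suc
          algebra_simps)
  next
    case False
    then show ?thesis by (simp add: lower_op_def opapp_def even_vec_def)
  qed
qed

lemma funpow_coeff_shift_basis: "(coeff_shift ^^ i) (basis 0) = basis i"
  by (induction i) (auto simp: coeff_shift_def basis_def fun_eq_iff)

lemma exp_partial_raise_op_Omega:
  "exp_partial (raise_op f) a Omega N = even_vec f (\<lambda>k. if k < N then exp_coeffs a k else 0)"
proof
  fix j
  have powers: "opapp (op_pow (raise_op f) k) Omega = even_vec f (basis k)" for k
  proof -
    have "(opapp (raise_op f) ^^ k) (even_vec f c) = even_vec f ((coeff_shift ^^ k) c)" for c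
      by (induction k) (simp_all add: raise_op_even_vec)
    then show ?thesis
      by (simp add: opapp_op_pow Omega_eq_even_vec[of f] funpow_coeff_shift_basis)
  qed
  show "exp_partial (raise_op f) a Omega N j =
        even_vec f (\<lambda>k. if k < N then exp_coeffs a k else 0) j"
  proof (cases "even j")
    case True
    then have "(\<Sum>k<N. a ^ k * even_vec f (basis k) j / of_nat (fact k)) =
               (\<Sum>k<N. if k = j div 2 then exp_coeffs a k * raise_prod f k else 0)"
      by (intro sum.cong) (auto simp: even_vec_def basis_def exp_coeffs_def)
    then show ?thesis
      using True by (simp add: exp_partial_def powers even_vec_def)
  next
    case False
    then show ?thesis by (simp add: exp_partial_def powers even_vec_def)
  qed
qed

lemma lower_coeffs_exp_coeffs: "lower_coeffs \<beta> (exp_coeffs a) = (\<lambda>k. a * \<beta> * exp_coeffs a k)"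
  using of_nat_neq_0[where 'a=complex]
  by (simp add: lower_coeffs_def exp_coeffs_def fun_eq_iff divide_simps add.commute)

definition moderate_growth :: "real \<Rightarrow> (nat \<Rightarrow> complex) \<Rightarrow> bool" where
  "moderate_growth r c \<longleftrightarrow>
     (\<exists>C\<ge>0. \<exists>p. \<forall>k. cmod (c k) \<le> C * (real k + 1) ^ p * r ^ k / fact k)"

lemma moderate_growthI:
  assumes "C \<ge> 0" and "\<And>k. cmod (c k) \<le> C * (real k + 1) ^ p * r ^ k / fact k"
  shows "moderate_growth r c"
  using assms unfolding moderate_growth_def by blast

lemma moderate_growthE:
  assumes "moderate_growth r c"
  obtains C p where "C \<ge> 0" and "\<And>k. cmod (c k) \<le> C * (real k + 1) ^ p * r ^ k / fact k"
  using assms unfolding moderate_growth_def by blast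

lemma moderate_growth_mono:
  assumes "moderate_growth r d" and "\<And>k. cmod (c k) \<le> cmod (d k)"
  shows "moderate_growth r c"
  using assms(1) by (elim moderate_growthE) (blast intro: moderate_growthI order_trans assms(2))

lemma moderate_growth_basis:
  assumes "0 < r"
  shows "moderate_growth r (basis i)"
  by (rule moderate_growthI[of "fact i / r ^ i" _ 0]) (use assms in \<open>auto simp: basis_def\<close>)

lemma moderate_growth_exp_coeffs:
  assumes "cmod a \<le> r"
  shows "moderate_growth r (exp_coeffs a)"
  by (rule moderate_growthI[of 1 _ 0])
     (use assms in \<open>auto simp: exp_coeffs_def norm_divide norm_power
        intro!: divide_right_mono power_mono\<close>)

lemma moderate_growth_coeff_shift:
  assumes r: "0 < r" and "moderate_growth r c"
  shows "moderate_growth r (coeff_shift c)"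
proof -
  obtain C p where C: "C \<ge> 0" and bound: "\<And>k. cmod (c k) \<le> C * (real k + 1) ^ p * r ^ k / fact k"
    using assms(2) by (elim moderate_growthE) blast
  show ?thesis
  proof (rule moderate_growthI[of "C / r" _ "Suc p"])
    fix k
    show "cmod (coeff_shift c k) \<le> (C / r) * (real k + 1) ^ Suc p * r ^ k / fact k"
    proof (cases k)
      case 0
      then show ?thesis using C r by (simp add: coeff_shift_def)
    next
      case (Suc i)
      have "cmod (coeff_shift c k) \<le> C * (real i + 1) ^ p * r ^ i / fact i"
        using bound Suc by (simp add: coeff_shift_def)
      also have "\<dots> = (C / r) * (real i + 1) ^ Suc p * r ^ k / fact k"
        using Suc r by (simp add: field_simps add_nonneg_eq_0_iff)
      also have "\<dots> \<le> (C / r) * (real k + 1) ^ Suc p * r ^ k / fact k"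
        using Suc C r by (intro divide_right_mono mult_right_mono mult_left_mono power_mono) auto
      finally show ?thesis .
    qed
  qed (use C r in simp)
qed

lemma moderate_growth_number_coeffs:
  assumes "moderate_growth r c"
  shows "moderate_growth r (number_coeffs c)"
proof -
  obtain C p where C: "C \<ge> 0" and bound: "\<And>k. cmod (c k) \<le> C * (real k + 1) ^ p * r ^ k / fact k"
    using assms by (elim moderate_growthE) blast
  show ?thesis
  proof (rule moderate_growthI[of "2 * C" _ "Suc p"])
    fix k
    have "cmod (number_coeffs c k) = 2 * real k * cmod (c k)"
      by (simp add: number_coeffs_def norm_mult)
    also have "\<dots> \<le> 2 * (real k + 1) * (C * (real k + 1) ^ p * r ^ k / fact k)"
      using bound by (intro mult_mono) auto
    also have "\<dots> = (2 * C) * (real k + 1) ^ Suc p * r ^ k / fact k"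
      by simp
    finally show "cmod (number_coeffs c k) \<le> (2 * C) * (real k + 1) ^ Suc p * r ^ k / fact k" .
  qed (use C in simp)
qed

lemma moderate_growth_lower_coeffs:
  assumes r: "0 < r" and "moderate_growth r c"
  shows "moderate_growth r (lower_coeffs \<beta> c)"
proof -
  obtain C p where C: "C \<ge> 0" and bound: "\<And>k. cmod (c k) \<le> C * (real k + 1) ^ p * r ^ k / fact k"
    using assms(2) by (elim moderate_growthE) blast
  define C' where "C' = cmod \<beta> * C * r * 2 ^ p"
  show ?thesis
  proof (rule moderate_growthI[of C' _ p])
    fix k
    have "cmod (lower_coeffs \<beta> c k) = (real k + 1) * cmod \<beta> * cmod (c (Suc k))"
      by (simp add: lower_coeffs_def norm_mult) (metis of_nat_Suc norm_of_nat add.commute)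
    also have "\<dots> \<le> (real k + 1) * cmod \<beta> * (C * (real k + 2) ^ p * r ^ Suc k / fact (Suc k))"
      using bound[of "Suc k"] by (intro mult_left_mono) (auto simp: add.commute)
    also have "\<dots> = cmod \<beta> * C * r * (real k + 2) ^ p * r ^ k / fact k"
      by (simp add: field_simps add_nonneg_eq_0_iff)
    also have "\<dots> \<le> cmod \<beta> * C * r * (2 * (real k + 1)) ^ p * r ^ k / fact k"
      using C r by (intro divide_right_mono mult_right_mono mult_left_mono power_mono) auto
    also have "\<dots> = C' * (real k + 1) ^ p * r ^ k / fact k"
      unfolding C'_def power_mult_distrib by (simp only: mult_ac)
    finally show "cmod (lower_coeffs \<beta> c k) \<le> C' * (real k + 1) ^ p * r ^ k / fact k" .
  qed (use C r in \<open>simp add: C'_def\<close>)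
qed

lemma raise_weight_Suc:
  "(real (Suc k) + 1) ^ p * r ^ Suc k * cmod (raise_prod f (Suc k)) / fact (Suc k) =
   ((real k + 2) / (real k + 1)) ^ p * (r * cmod (f (2 * k + 2)) / (real k + 1)) *
   ((real k + 1) ^ p * r ^ k * cmod (raise_prod f k) / fact k)"
  by (simp add: raise_prod_Suc norm_mult field_simps add_nonneg_eq_0_iff)

text \<open>The \<open>M\<^sub>f\<close> of the statement, weakened to a liminf. A zero \<open>f(2k)\<close> contributes
  \<open>k / 0 = 0\<close>.\<close>
definition raise_radius :: "(nat \<Rightarrow> complex) \<Rightarrow> ereal" where
  "raise_radius f = liminf (\<lambda>k. ereal (real k / cmod (f (2 * k))))"

locale below_raise_radius =
  fixes f :: "nat \<Rightarrow> complex" and r :: real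
  assumes r_pos: "0 < r" and r_less_radius: "ereal r < raise_radius f"
begin

text \<open>Ratio test: in \<open>raise_weight_Suc\<close> the first factor tends to 1 and the second is
  eventually below \<open>r / r'\<close> for some \<open>r' > r\<close>.\<close>
lemma summable_raise_weight:
  "summable (\<lambda>k. ((real k + 1) ^ p * r ^ k * cmod (raise_prod f k) / fact k)^2)"
proof -
  obtain r' where "ereal r < ereal r'" and "ereal r' < raise_radius f"
    using ereal_dense2[OF r_less_radius] by blast
  then have r': "r < r'" and "eventually (\<lambda>k. r' < real k / cmod (f (2 * k))) sequentially"
    unfolding raise_radius_def by (auto dest: less_LiminfD)
  then have "eventually (\<lambda>k. r' < (real k + 1) / cmod (f (2 * k + 2))) sequentially"
    by (subst (asm) eventually_sequentially_Suc[symmetric]) (simp add: add.commute)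
  moreover have "(\<lambda>k. ((real k + 2) / (real k + 1)) ^ (2 * p)) \<longlonglongrightarrow> 1"
    by real_asymp
  then have "eventually (\<lambda>k. ((real k + 2) / (real k + 1)) ^ (2 * p) < r' / r) sequentially"
    using r_pos r' by (intro order_tendstoD(2)) auto
  ultimately have "eventually (\<lambda>k. r' < (real k + 1) / cmod (f (2 * k + 2)) \<and>
                     ((real k + 2) / (real k + 1)) ^ (2 * p) < r' / r) sequentially"
    by (rule eventually_conj)
  then obtain N where N: "\<And>k. k \<ge> N \<Longrightarrow> r' < (real k + 1) / cmod (f (2 * k + 2)) \<and>
                                     ((real k + 2) / (real k + 1)) ^ (2 * p) < r' / r"
    unfolding eventually_sequentially by blast
  define w where "w k = (real k + 1) ^ p * r ^ k * cmod (raise_prod f k) / fact k" for k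
  have "(w (Suc k))^2 \<le> (r / r') * (w k)^2" if "k \<ge> N" for k
  proof -
    define A where "A = ((real k + 2) / (real k + 1)) ^ p"
    define B where "B = r * cmod (f (2 * k + 2)) / (real k + 1)"
    have ratio: "r' < (real k + 1) / cmod (f (2 * k + 2))"
      using N[OF that] by blast
    then have "cmod (f (2 * k + 2)) \<noteq> 0"
      using r_pos r' by auto
    then have "cmod (f (2 * k + 2)) * r' < real k + 1"
      using ratio by (simp add: field_simps)
    then have "r * (cmod (f (2 * k + 2)) * r') \<le> r * (real k + 1)"
      using r_pos by (intro mult_left_mono) auto
    then have "B \<le> r / r'"
      using r_pos r' by (simp add: B_def field_simps)
    then have "B^2 \<le> (r / r')^2"
      using r_pos by (intro power_mono) (simp_all add: B_def)
    moreover have "A^2 \<le> r' / r"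
      using N[OF that] by (simp add: A_def power_mult[symmetric] mult.commute)
    ultimately have AB: "A^2 * B^2 \<le> (r' / r) * (r / r')^2"
      using r_pos r' by (intro mult_mono) auto
    have "w (Suc k) = A * B * w k"
      unfolding w_def A_def B_def by (rule raise_weight_Suc)
    then have "(w (Suc k))^2 = A^2 * B^2 * (w k)^2"
      by (simp add: power_mult_distrib)
    also have "\<dots> \<le> (r' / r) * (r / r')^2 * (w k)^2"
      using AB by (intro mult_right_mono) auto
    also have "\<dots> = (r / r') * (w k)^2"
      using r_pos by (simp add: power2_eq_square)
    finally show ?thesis .
  qed
  then have "summable (\<lambda>k. (w k)^2)"
    using r_pos r' by (intro summable_ratio_test[of "r / r'" N]) auto
  then show ?thesis
    by (simp add: w_def)
qed

lemma summable_moderate_growth: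
  assumes "moderate_growth r c"
  shows "summable (\<lambda>k. (cmod (c k * raise_prod f k))^2)"
proof -
  obtain C p where C: "C \<ge> 0" and bound: "\<And>k. cmod (c k) \<le> C * (real k + 1) ^ p * r ^ k / fact k"
    using assms by (elim moderate_growthE) blast
  define w where "w k = (real k + 1) ^ p * r ^ k * cmod (raise_prod f k) / fact k" for k
  have le: "cmod (c k * raise_prod f k) \<le> C * w k" for k
  proof -
    have "cmod (c k * raise_prod f k) \<le> C * (real k + 1) ^ p * r ^ k / fact k * cmod (raise_prod f k)"
      unfolding norm_mult using bound[of k] by (rule mult_right_mono) simp
    then show ?thesis
      by (simp add: w_def)
  qed
  have "summable (\<lambda>k. C^2 * (w k)^2)"
    unfolding w_def by (rule summable_mult) (rule summable_raise_weight)
  then show ?thesis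
  proof (rule summable_comparison_test')
    fix k
    have "(cmod (c k * raise_prod f k))^2 \<le> (C * w k)^2"
      using le by (rule power_mono) simp
    then show "norm ((cmod (c k * raise_prod f k))^2) \<le> C^2 * (w k)^2"
      by (simp add: power_mult_distrib)
  qed
qed

lemma even_vec_l2: "moderate_growth r c \<Longrightarrow> even_vec f c \<in> l2"
  unfolding l2_def using sums_even_vec[OF summable_moderate_growth] by (simp add: sums_iff)

lemma even_vec_op_pow:
  assumes "maximal_domain A"
    and act: "\<And>c. opapp A (even_vec f c) = even_vec f (T c)"
    and preserves: "\<And>c. moderate_growth r c \<Longrightarrow> moderate_growth r (T c)"
    and c: "moderate_growth r c"
  shows "even_vec f c \<in> opdom (op_pow A k)"
    and "opapp (op_pow A k) (even_vec f c) = even_vec f ((T ^^ k) c)"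
    and "moderate_growth r ((T ^^ k) c)"
proof -
  have powers: "(opapp A ^^ i) (even_vec f c) = even_vec f ((T ^^ i) c)" for i
    by (induction i) (simp_all add: act)
  have moderate: "moderate_growth r ((T ^^ i) c)" for i
    by (induction i) (simp_all add: c preserves)
  show "even_vec f c \<in> opdom (op_pow A k)"
    unfolding opdom_op_pow[OF assms(1)] powers using moderate by (blast intro: even_vec_l2)
  show "opapp (op_pow A k) (even_vec f c) = even_vec f ((T ^^ k) c)"
    by (simp add: opapp_op_pow powers)
  show "moderate_growth r ((T ^^ k) c)"
    by (rule moderate)
qed

lemma exp_converges_Omega:
  assumes "cmod a \<le> r"
  shows "exp_converges_to (raise_op f) a Omega (even_vec f (exp_coeffs a))"
proof -
  define u where "u k = (cmod (exp_coeffs a k * raise_prod f k))^2" for k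
  have u: "summable u"
    unfolding u_def using assms by (intro summable_moderate_growth moderate_growth_exp_coeffs)
  have tail: "l2norm (\<lambda>j. exp_partial (raise_op f) a Omega N j - even_vec f (exp_coeffs a) j)
              = sqrt (suminf u - (\<Sum>k<N. u k))" for N
  proof -
    have "(\<lambda>k. (cmod (((if k < N then exp_coeffs a k else 0) - exp_coeffs a k) * raise_prod f k))^2)
          = (\<lambda>k. u k - (if k \<in> {..<N} then u k else 0))"
      by (auto simp: u_def fun_eq_iff norm_mult norm_minus_commute)
    moreover have "(\<lambda>k. u k - (if k \<in> {..<N} then u k else 0)) sums (suminf u - (\<Sum>k<N. u k))"
      by (intro sums_diff summable_sums u sums_If_finite_set) simp
    ultimately show ?thesis
      using sums_even_vec[of "\<lambda>k. (if k < N then exp_coeffs a k else 0) - exp_coeffs a k" f]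
      by (simp add: exp_partial_raise_op_Omega even_vec_diff l2norm_def sums_iff)
  qed
  have "(\<lambda>N. sqrt (suminf u - (\<Sum>k<N. u k))) \<longlonglongrightarrow> sqrt (suminf u - suminf u)"
    by (intro tendsto_intros summable_LIMSEQ u)
  then show ?thesis
    unfolding exp_converges_to_def tail
    using assms by (simp add: even_vec_l2 moderate_growth_exp_coeffs)
qed

lemma op_exp_raise_op_Omega:
  assumes "cmod a \<le> r"
  shows "Omega \<in> opdom (op_exp (raise_op f) a)"
    and "opapp (op_exp (raise_op f) a) Omega = even_vec f (exp_coeffs a)"
proof -
  have powers: "Omega \<in> opdom (op_pow (raise_op f) k)" for k
    unfolding Omega_eq_even_vec[of f]
    by (rule even_vec_op_pow(1)[OF maximal_domain_raise_op raise_op_even_vec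
          moderate_growth_coeff_shift[OF r_pos] moderate_growth_basis[OF r_pos]])
  have partial_sums: "exp_partial (raise_op f) a Omega N \<in> l2" for N
    unfolding exp_partial_raise_op_Omega using assms
    by (intro even_vec_l2 moderate_growth_mono[OF moderate_growth_exp_coeffs]) auto
  show "Omega \<in> opdom (op_exp (raise_op f) a)"
    and "opapp (op_exp (raise_op f) a) Omega = even_vec f (exp_coeffs a)"
    using op_exp_apply[OF powers partial_sums exp_converges_Omega[OF assms]] by auto
qed

end

lemma lower_raise_relation:
  fixes f g :: "nat \<Rightarrow> complex"
  assumes "\<forall>k. even k \<longrightarrow> g (k + 2) * f (k + 2) - (if k \<ge> 2 then g k * f k else 0) = \<beta>"
  shows "g (2 * k + 2) * f (2 * k + 2) = (of_nat k + 1) * \<beta>"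
proof (induction k)
  case 0
  show ?case
    using assms[rule_format, of 0] by simp
next
  case (Suc k)
  then show ?case
    using assms[rule_format, of "2 * k + 2"] by (simp add: algebra_simps)
qed

theorem mainTheorem6:
  fixes f g :: "nat \<Rightarrow> complex" and \<beta> \<alpha> :: complex and M :: ereal and l m n :: nat
  assumes hrel: "\<forall>k. even k \<longrightarrow>
                   g (k + 2) * f (k + 2) - (if k \<ge> 2 then g k * f k else 0) = \<beta>"
    and hf: "\<forall>k\<ge>1. cmod (f (2 * k)) > 0"
    and hM: "((\<lambda>k. ereal (real k / cmod (f (2 * k)))) \<longlongrightarrow> M) sequentially"
    and h\<alpha>: "ereal (cmod \<alpha>) < M"
  shows "Omega \<in> opdom (op_comp (op_pow (lower_op g) l)
                   (op_comp (op_pow numop m)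
                     (op_comp (op_pow (raise_op f) n) (op_exp (raise_op f) \<alpha>))))
         \<and> opapp (lower_op g) (opapp (op_exp (raise_op f) \<alpha>) Omega)
             = (\<lambda>j. (\<alpha> * \<beta>) * opapp (op_exp (raise_op f) \<alpha>) Omega j)"
proof -
  obtain r where "ereal (cmod \<alpha>) < ereal r" and "ereal r < M"
    using ereal_dense2[OF h\<alpha>] by blast
  then have \<alpha>: "cmod \<alpha> \<le> r" and "0 < r" and "ereal r < raise_radius f"
    unfolding raise_radius_def lim_imp_Liminf[OF trivial_limit_sequentially hM]
    by (auto intro: le_less_trans[OF norm_ge_zero])
  then interpret below_raise_radius f r
    by unfold_locales
  have lower: "opapp (lower_op g) (even_vec f c) = even_vec f (lower_coeffs \<beta> c)" for c
    by (intro lower_op_even_vec lower_raise_relation[OF hrel])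
  note exp = op_exp_raise_op_Omega[OF \<alpha>]
  note raise = even_vec_op_pow[OF maximal_domain_raise_op raise_op_even_vec
      moderate_growth_coeff_shift[OF r_pos] moderate_growth_exp_coeffs[OF \<alpha>], of n]
  note number = even_vec_op_pow[OF maximal_domain_numop numop_even_vec
      moderate_growth_number_coeffs raise(3), of m]
  note lowering = even_vec_op_pow[OF maximal_domain_lower_op lower
      moderate_growth_lower_coeffs[OF r_pos] number(3), of l]
  show ?thesis
    using exp raise number lowering
    by (simp add: opdom_op_comp opapp_op_comp lower lower_coeffs_exp_coeffs even_vec_scale)
qed

end
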